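(* Let $f(x_1)=c_0+c_1x_1+\cdots+c_dx_1^d\in\mathbb{C}[x_1]$ with $d\ge1$, $|c_i|\le1$ for all $i$, and $|c_0|=|c_d|=1$. Then $\mathrm{ArchNewt}(f)$ has exactly one lower edge, this edge is horizontal, $\mathrm{ArchTrop}(f)=\{0\}$, and $$\sup_{\sigma\in\mathrm{ArchTrop}(f)}\ \inf_{\rho\in\mathrm{Amoeba}(f)}|\rho-\sigma|\le\log\frac{\sqrt5+1}{2}<0.482.$$ Moreover, equality is attained for $f(x_1)=x_1^2-x_1-1$.
   Context: For $f(x_1)=\sum_ic_ix_1^{a_i}$ (only terms with $c_i\neq0$ counted), $\mathrm{ArchNewt}(f)=\mathrm{Conv}\{(a_i,-\log|c_i|): c_i\ne0\}\subset\mathbb{R}^2$; a lower edge is an edge having an outer normal of the form $(v,-1)$. $\mathrm{ArchTrop}(f)$ is the set of $v\in\mathbb{R}$ such that $(v,-1)$ is an outer normal of an edge of $\mathrm{ArchNewt}(f)$ (i.e. the set of slopes of lower edges). $\mathrm{Amoeba}(f)=\{\log|\zeta|:\zeta\in\mathbb{C}^*, f(\zeta)=0\}$. *)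

theory Defs
  imports "HOL-Analysis.Analysis" "HOL-Computational_Algebra.Polynomial"
begin

definition ArchNewt :: "complex poly \<Rightarrow> (real \<times> real) set" where
  "ArchNewt f = convex hull {(real i, - ln (cmod (coeff f i))) | i. coeff f i \<noteq> 0}"

definition outer_normal :: "(real \<times> real) set \<Rightarrow> (real \<times> real) set \<Rightarrow> real \<times> real \<Rightarrow> bool" where
  "outer_normal P E w \<longleftrightarrow> E = {x \<in> P. \<forall>y\<in>P. w \<bullet> y \<le> w \<bullet> x}"

definition is_edge :: "(real \<times> real) set \<Rightarrow> (real \<times> real) set \<Rightarrow> bool" where
  "is_edge P E \<longleftrightarrow> E face_of P \<and> aff_dim E = 1"

definition lower_edge :: "(real \<times> real) set \<Rightarrow> (real \<times> real) set \<Rightarrow> bool" where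
  "lower_edge P E \<longleftrightarrow> is_edge P E \<and> (\<exists>v. outer_normal P E (v, -1))"

definition horizontal :: "(real \<times> real) set \<Rightarrow> bool" where
  "horizontal E \<longleftrightarrow> (\<forall>x\<in>E. \<forall>y\<in>E. snd x = snd y)"

definition ArchTrop :: "complex poly \<Rightarrow> real set" where
  "ArchTrop f = {v. \<exists>E. is_edge (ArchNewt f) E \<and> outer_normal (ArchNewt f) E (v, -1)}"

definition Amoeba :: "complex poly \<Rightarrow> real set" where
  "Amoeba f = {ln (cmod z) | z. z \<noteq> 0 \<and> poly f z = 0}"

end

theory Submission
  imports Defs "HOL-Computational_Algebra.Fundamental_Theorem_Algebra"
begin

text \<open>
  The coefficient bounds put the Newton polygon into the strip \<open>[0, d] \<times> [0, \<infinity>)\<close> and the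
  conditions \<open>|c_0| = |c_d| = 1\<close> put \<open>(0, 0)\<close> and \<open>(d, 0)\<close> into it, so the bottom segment is the
  only lower edge, with slope \<open>0\<close>.

  For the amoeba, replacing a linear factor \<open>x - z\<close> of \<open>f\<close> by \<open>cnj z * x - 1\<close> does not change
  the sum of the squared moduli of the coefficients. Doing this for every root outside the unit
  disc produces a polynomial whose extreme coefficients have moduli \<open>M = \<Prod> max 1 |z|\<close> and
  \<open>m = \<Prod> min 1 |z|\<close>, hence \<open>M\<^sup>2 + m\<^sup>2 \<le> d + 1\<close>, while \<open>M m = |c_0 / c_d| = 1\<close>. If every root
  satisfied \<open>|log |z|| > log \<phi>\<close> for the golden ratio \<open>\<phi>\<close>, then \<open>t = M / m = M\<^sup>2 > \<phi>\<^sup>d\<close> and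
  \<open>t + 1/t > \<phi>\<^sup>d + \<phi>\<^sup>-\<^sup>d \<ge> d + 1\<close>, a contradiction. For \<open>x\<^sup>2 - x - 1\<close> the roots are \<open>\<phi>\<close> and \<open>-1/\<phi>\<close>.
\<close>

section \<open>Newton polygons in a strip\<close>

lemma inner_real_pair: "((v::real), (w::real)) \<bullet> x = v * fst x + w * snd x"
  by (cases x) simp

lemma closed_segment_on_first_axis:
  fixes a :: real assumes "0 < a"
  shows "closed_segment (0, 0) (a, 0::real) = {x. 0 \<le> fst x \<and> fst x \<le> a \<and> snd x = 0}"
proof -
  have mem: "(s, t) \<in> closed_segment (0, 0) (a, 0) \<longleftrightarrow> 0 \<le> s \<and> s \<le> a \<and> t = 0" for s t :: real
  proof
    assume "(s, t) \<in> closed_segment (0, 0) (a, 0)"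
    then have "s \<in> closed_segment 0 a" "t \<in> closed_segment 0 0"
      by (auto dest: closed_segment_PairD)
    then show "0 \<le> s \<and> s \<le> a \<and> t = 0"
      using assms by (auto simp: closed_segment_eq_real_ivl)
  next
    assume "0 \<le> s \<and> s \<le> a \<and> t = 0"
    then show "(s, t) \<in> closed_segment (0, 0) (a, 0)"
      using assms unfolding closed_segment_def by (auto intro!: exI[of _ "s / a"])
  qed
  show ?thesis by (auto simp: mem)
qed

locale polygon_in_strip =
  fixes P :: "(real \<times> real) set" and a :: real
  assumes convex: "convex P" and width_pos: "0 < a"
    and origin_mem: "(0, 0) \<in> P" and corner_mem: "(a, 0) \<in> P"
    and subset_strip: "P \<subseteq> {0..a} \<times> {0..}"
begin

lemma mem_strip: "x \<in> P \<Longrightarrow> 0 \<le> fst x \<and> fst x \<le> a \<and> 0 \<le> snd x"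
  using subset_strip by auto

lemma bottom_eq_closed_segment: "{x \<in> P. snd x = 0} = closed_segment (0, 0) (a, 0)"
proof -
  have "closed_segment (0, 0) (a, 0) \<subseteq> P"
    using convex origin_mem corner_mem by (simp add: closed_segment_subset)
  then show ?thesis
    using subset_strip width_pos by (auto simp: closed_segment_on_first_axis)
qed

lemma outer_normal_zero_slope_iff:
  "outer_normal P E (0, -1) \<longleftrightarrow> E = closed_segment (0, 0) (a, 0)"
proof -
  have "{x \<in> P. \<forall>y\<in>P. (0, -1) \<bullet> y \<le> (0, -1) \<bullet> x} = {x \<in> P. snd x = 0}"
    using origin_mem subset_strip by (force simp: inner_real_pair)
  then show ?thesis
    by (simp add: outer_normal_def bottom_eq_closed_segment)
qed

lemma outer_normal_pos_slope_iff:
  assumes "0 < v" shows "outer_normal P E (v, -1) \<longleftrightarrow> E = {(a, 0)}"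
proof -
  have "v * fst x - snd x \<le> v * a" if "x \<in> P" for x :: "real \<times> real"
    using mem_strip[OF that] assms mult_left_mono[of "fst x" a v] by linarith
  moreover have "x = (a, 0)" if "x \<in> P" "v * a \<le> v * fst x - snd x" for x :: "real \<times> real"
  proof -
    have "v * fst x \<le> v * a" using mem_strip[OF that(1)] assms by simp
    then have "snd x = 0" "v * a \<le> v * fst x" using mem_strip[OF that(1)] that(2) by linarith+
    then have "fst x = a" "snd x = 0" using mem_strip[OF that(1)] assms by auto
    then show ?thesis by (simp add: prod_eq_iff)
  qed
  ultimately have "{x \<in> P. \<forall>y\<in>P. (v, -1) \<bullet> y \<le> (v, -1) \<bullet> x} = {(a, 0)}"
    using corner_mem by (fastforce simp: inner_real_pair)
  then show ?thesis by (simp add: outer_normal_def)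
qed

lemma outer_normal_neg_slope_iff:
  assumes "v < 0" shows "outer_normal P E (v, -1) \<longleftrightarrow> E = {(0, 0)}"
proof -
  have "v * fst x - snd x \<le> 0" if "x \<in> P" for x :: "real \<times> real"
    using mem_strip[OF that] assms mult_nonpos_nonneg[of v "fst x"] by linarith
  moreover have "x = (0, 0)" if "x \<in> P" "0 \<le> v * fst x - snd x" for x :: "real \<times> real"
  proof -
    have "v * fst x \<le> 0" using mem_strip[OF that(1)] assms mult_nonpos_nonneg[of v "fst x"] by simp
    then have "v * fst x = 0" "snd x = 0" using mem_strip[OF that(1)] that(2) by linarith+
    then have "fst x = 0" "snd x = 0" using assms by auto
    then show ?thesis by (simp add: prod_eq_iff)
  qed
  ultimately have "{x \<in> P. \<forall>y\<in>P. (v, -1) \<bullet> y \<le> (v, -1) \<bullet> x} = {(0, 0)}"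
    using origin_mem by (fastforce simp: inner_real_pair)
  then show ?thesis by (simp add: outer_normal_def)
qed

lemma bottom_segment_is_edge: "is_edge P (closed_segment (0, 0) (a, 0))"
proof -
  have "P \<inter> {x. (0, -1) \<bullet> x = (0::real)} face_of P"
    using convex subset_strip
    by (intro face_of_Int_supporting_hyperplane_le) (auto simp: inner_real_pair)
  moreover have "P \<inter> {x. (0, -1) \<bullet> x = (0::real)} = closed_segment (0, 0) (a, 0)"
    by (auto simp: inner_real_pair simp flip: bottom_eq_closed_segment)
  moreover have "aff_dim (closed_segment (0, 0) (a, 0)) = 1"
    using width_pos by (simp add: segment_convex_hull aff_dim_convex_hull)
  ultimately show ?thesis by (simp add: is_edge_def)
qed

lemma edge_with_lower_normal_iff:
  "is_edge P E \<and> outer_normal P E (v, -1) \<longleftrightarrow> E = closed_segment (0, 0) (a, 0) \<and> v = 0"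
proof (cases v "0::real" rule: linorder_cases)
  case less
  then show ?thesis
    using width_pos by (auto simp: outer_normal_neg_slope_iff is_edge_def)
next
  case equal
  then show ?thesis using bottom_segment_is_edge outer_normal_zero_slope_iff by blast
next
  case greater
  then show ?thesis
    using width_pos by (auto simp: outer_normal_pos_slope_iff is_edge_def)
qed

lemma lower_edge_iff: "lower_edge P E \<longleftrightarrow> E = closed_segment (0, 0) (a, 0)"
proof
  assume "lower_edge P E"
  then obtain v where "is_edge P E" "outer_normal P E (v, -1)" by (auto simp: lower_edge_def)
  then show "E = closed_segment (0, 0) (a, 0)" using edge_with_lower_normal_iff by blast
next
  assume "E = closed_segment (0, 0) (a, 0)"
  then show "lower_edge P E"
    using bottom_segment_is_edge outer_normal_zero_slope_iff by (auto simp: lower_edge_def)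
qed

lemma lower_normal_slopes: "{v. \<exists>E. is_edge P E \<and> outer_normal P E (v, -1)} = {0}"
  by (auto simp: edge_with_lower_normal_iff)

end

lemma horizontal_closed_segment_on_first_axis: "horizontal (closed_segment (0, 0) (a, 0))"
  by (auto simp: horizontal_def closed_segment_def)

lemma ArchNewt_polygon_in_strip:
  fixes f :: "complex poly"
  assumes "1 \<le> degree f" and "\<forall>i. cmod (coeff f i) \<le> 1"
    and "cmod (coeff f 0) = 1" and "cmod (lead_coeff f) = 1"
  shows "polygon_in_strip (ArchNewt f) (real (degree f))"
proof
  define S where "S = {(real i, - ln (cmod (coeff f i))) | i. coeff f i \<noteq> 0}"
  have hull: "ArchNewt f = convex hull S" by (simp add: ArchNewt_def S_def)
  then show "convex (ArchNewt f)" by simp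
  show "0 < real (degree f)" using assms(1) by simp
  have "(0, 0) \<in> S" "(real (degree f), 0) \<in> S"
    using assms(3,4) unfolding S_def by (auto intro!: exI[of _ 0] exI[of _ "degree f"])
  then show "(0, 0) \<in> ArchNewt f" "(real (degree f), 0) \<in> ArchNewt f"
    by (simp_all add: hull hull_inc)
  have "S \<subseteq> {0..real (degree f)} \<times> {0..}"
    using assms(2) le_degree unfolding S_def by force
  moreover have "convex ({0..real (degree f)} \<times> {0::real..})"
    by (simp add: convex_Times)
  ultimately show "ArchNewt f \<subseteq> {0..real (degree f)} \<times> {0..}"
    by (simp add: hull hull_minimal)
qed

section \<open>The coefficient norm and reflection of roots\<close>

definition coeff_norm2 :: "complex poly \<Rightarrow> real" where
  "coeff_norm2 p = (\<Sum>i\<le>degree p. (cmod (coeff p i))\<^sup>2)"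

lemma coeff_norm2_eq_sum_atMost:
  "degree p \<le> N \<Longrightarrow> (\<Sum>i\<le>N. (cmod (coeff p i))\<^sup>2) = coeff_norm2 p"
  unfolding coeff_norm2_def by (rule sum.mono_neutral_right) (auto simp: coeff_eq_0)

lemma coeff_norm2_le_Suc_degree:
  assumes "\<forall>i. cmod (coeff p i) \<le> 1" shows "coeff_norm2 p \<le> real (degree p) + 1"
proof -
  have "coeff_norm2 p \<le> (\<Sum>i\<le>degree p. 1)"
    unfolding coeff_norm2_def using assms by (intro sum_mono) (auto intro: power_le_one)
  then show ?thesis by simp
qed

lemma coeff_norm2_ge_extreme_coeffs:
  assumes "1 \<le> degree p"
  shows "(cmod (coeff p 0))\<^sup>2 + (cmod (lead_coeff p))\<^sup>2 \<le> coeff_norm2 p"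
proof -
  have "(\<Sum>i\<in>{0, degree p}. (cmod (coeff p i))\<^sup>2) \<le> coeff_norm2 p"
    unfolding coeff_norm2_def by (rule sum_mono2) auto
  then show ?thesis using assms by simp
qed

lemma norm_sq_diff_sub_norm_sq_diff_cnj:
  fixes u v b :: complex
  shows "(cmod (u - b * v))\<^sup>2 - (cmod (cnj b * u - v))\<^sup>2 = ((cmod u)\<^sup>2 - (cmod v)\<^sup>2) * (1 - (cmod b)\<^sup>2)"
  by (simp only: cmod_power2) (simp add: power2_eq_square algebra_simps)

lemma coeff_norm2_reflect_root:
  "coeff_norm2 ([:-b, 1:] * q) = coeff_norm2 ([:-1, cnj b:] * q)"
proof -
  define N where "N = Suc (degree q)"
  define u where "u i = coeff (pCons 0 q) i" for i
  define v where "v i = coeff q i" for i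
  have coeff_left: "coeff ([:-b, 1:] * q) i = u i - b * v i" for i
    by (simp add: u_def v_def)
  have coeff_right: "coeff ([:-1, cnj b:] * q) i = cnj b * u i - v i" for i
    by (cases i) (simp_all add: u_def v_def)
  have "degree [:-b, 1:] \<le> 1" "degree [:-1, cnj b:] \<le> 1"
    by (simp_all add: degree_pCons_eq_if)
  then have "degree ([:-b, 1:] * q) \<le> N" "degree ([:-1, cnj b:] * q) \<le> N"
    unfolding N_def using degree_mult_le[of "[:-b, 1:]" q] degree_mult_le[of "[:-1, cnj b:]" q]
    by linarith+
  then have norms: "coeff_norm2 ([:-b, 1:] * q) = (\<Sum>i\<le>N. (cmod (u i - b * v i))\<^sup>2)"
      "coeff_norm2 ([:-1, cnj b:] * q) = (\<Sum>i\<le>N. (cmod (cnj b * u i - v i))\<^sup>2)"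
    by (simp_all only: coeff_norm2_eq_sum_atMost[of _ N, symmetric] coeff_left coeff_right)
  have "(\<Sum>i\<le>N. (cmod (u i))\<^sup>2) = coeff_norm2 q"
    unfolding N_def sum.atMost_Suc_shift by (simp add: u_def coeff_norm2_def)
  moreover have "(\<Sum>i\<le>N. (cmod (v i))\<^sup>2) = coeff_norm2 q"
    unfolding v_def by (rule coeff_norm2_eq_sum_atMost) (simp add: N_def)
  ultimately have "((\<Sum>i\<le>N. (cmod (u i))\<^sup>2) - (\<Sum>i\<le>N. (cmod (v i))\<^sup>2)) * (1 - (cmod b)\<^sup>2) = 0"
    by simp
  then have "(\<Sum>i\<le>N. (cmod (u i - b * v i))\<^sup>2 - (cmod (cnj b * u i - v i))\<^sup>2) = 0"
    unfolding norm_sq_diff_sub_norm_sq_diff_cnj sum_distrib_right[symmetric] sum_subtractf .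
  then show ?thesis using norms by (simp add: sum_subtractf)
qed

text \<open>For \<open>1 < cmod z\<close> the factor \<open>cnj z * x - 1\<close> has the root \<open>1 / cnj z\<close>, the reflection
  of \<open>z\<close> in the unit circle.\<close>
definition disc_factor :: "complex \<Rightarrow> complex poly" where
  "disc_factor z = (if 1 < cmod z then [:-1, cnj z:] else [:-z, 1:])"

lemma coeff_norm2_prod_disc_factor:
  "coeff_norm2 (q * (\<Prod>z\<in>#Z. [:-z, 1:])) = coeff_norm2 (q * (\<Prod>z\<in>#Z. disc_factor z))"
proof (induction Z arbitrary: q)
  case empty
  show ?case by simp
next
  case (add b Z)
  have "coeff_norm2 (q * (\<Prod>z\<in>#add_mset b Z. [:-z, 1:]))
      = coeff_norm2 ((q * [:-b, 1:]) * (\<Prod>z\<in>#Z. [:-z, 1:]))"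
    by (simp only: prod_mset.add_mset image_mset_add_mset mult_ac)
  also have "\<dots> = coeff_norm2 ([:-b, 1:] * (q * (\<Prod>z\<in>#Z. disc_factor z)))"
    using add.IH[of "q * [:-b, 1:]"] by (simp only: mult_ac)
  also have "\<dots> = coeff_norm2 (disc_factor b * (q * (\<Prod>z\<in>#Z. disc_factor z)))"
  proof (cases "1 < cmod b")
    case True
    then have "disc_factor b = [:-1, cnj b:]" by (simp add: disc_factor_def)
    then show ?thesis by (simp only: coeff_norm2_reflect_root)
  qed (simp add: disc_factor_def)
  also have "\<dots> = coeff_norm2 (q * (\<Prod>z\<in>#add_mset b Z. disc_factor z))"
    by (simp only: prod_mset.add_mset image_mset_add_mset mult_ac)
  finally show ?case .
qed

lemma degree_prod_disc_factor: "degree (\<Prod>z\<in>#Z. disc_factor z) = size Z"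
proof (induction Z)
  case (add z Z)
  have "disc_factor z \<noteq> 0" "degree (disc_factor z) = 1"
    by (auto simp: disc_factor_def)
  moreover have "(\<Prod>z\<in>#Z. disc_factor z) \<noteq> 0"
    using \<open>disc_factor z \<noteq> 0\<close> by (auto simp: prod_mset_zero_iff disc_factor_def)
  ultimately show ?case using add.IH by (simp add: degree_mult_eq)
qed simp

lemma norm_lead_coeff_prod_disc_factor:
  "cmod (lead_coeff (\<Prod>z\<in>#Z. disc_factor z)) = (\<Prod>z\<in>#Z. max 1 (cmod z))"
  by (induction Z) (auto simp: lead_coeff_mult norm_mult disc_factor_def)

lemma norm_poly_0_prod_disc_factor:
  "cmod (poly (\<Prod>z\<in>#Z. disc_factor z) 0) = (\<Prod>z\<in>#Z. min 1 (cmod z))"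
  by (induction Z) (auto simp: norm_mult disc_factor_def)

lemma norm_prod_mset:
  fixes f :: "'a \<Rightarrow> 'b::{real_normed_field}"
  shows "norm (\<Prod>x\<in>#A. f x) = (\<Prod>x\<in>#A. norm (f x))"
  by (induction A) (simp_all add: norm_mult)

lemma norm_coeff_0_eq_prod_roots:
  fixes f :: "complex poly"
  shows "cmod (coeff f 0) = cmod (lead_coeff f) * (\<Prod>z\<in>#proots f. cmod z)"
proof -
  have "coeff f 0 = lead_coeff f * (\<Prod>z\<in>#proots f. - z)"
    by (subst (1) complex_poly_decompose_multiset[symmetric])
       (simp add: poly_prod_mset flip: poly_0_coeff_0)
  then show ?thesis by (simp add: norm_mult norm_prod_mset)
qed

lemma coeff_norm2_ge_root_products:
  fixes f :: "complex poly"
  assumes "1 \<le> degree f"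
  shows "(cmod (lead_coeff f))\<^sup>2 * ((\<Prod>z\<in>#proots f. max 1 (cmod z))\<^sup>2 + (\<Prod>z\<in>#proots f. min 1 (cmod z))\<^sup>2)
    \<le> coeff_norm2 f"
proof -
  define c where "c = lead_coeff f"
  define F where "F = smult c (\<Prod>z\<in>#proots f. disc_factor z)"
  have "coeff_norm2 f = coeff_norm2 ([:c:] * (\<Prod>z\<in>#proots f. [:-z, 1:]))"
    using complex_poly_decompose_multiset[of f] by (simp add: c_def)
  also have "\<dots> = coeff_norm2 F"
    unfolding coeff_norm2_prod_disc_factor F_def by simp
  finally have norm_eq: "coeff_norm2 f = coeff_norm2 F" .
  have "c \<noteq> 0" using assms by (auto simp: c_def)
  then have "degree F = degree f"
    by (simp add: F_def degree_prod_disc_factor size_proots_complex)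
  then have "(cmod (coeff F 0))\<^sup>2 + (cmod (lead_coeff F))\<^sup>2 \<le> coeff_norm2 f"
    using assms coeff_norm2_ge_extreme_coeffs[of F] norm_eq by simp
  moreover have "cmod (coeff F 0) = cmod c * (\<Prod>z\<in>#proots f. min 1 (cmod z))"
    by (simp add: F_def norm_mult norm_poly_0_prod_disc_factor flip: poly_0_coeff_0)
  moreover have "cmod (lead_coeff F) = cmod c * (\<Prod>z\<in>#proots f. max 1 (cmod z))"
    by (simp add: F_def norm_mult norm_lead_coeff_prod_disc_factor)
  ultimately show ?thesis by (simp add: c_def power_mult_distrib algebra_simps)
qed

section \<open>The golden ratio\<close>

definition golden_ratio :: real where
  "golden_ratio = (sqrt 5 + 1) / 2"

lemma golden_ratio_sq: "golden_ratio\<^sup>2 = golden_ratio + 1"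
  by (simp add: golden_ratio_def power2_eq_square field_simps)

lemma golden_ratio_gt: "1.6 < golden_ratio"
proof -
  have "2.2 < sqrt (5::real)" by (rule real_less_rsqrt) (simp add: power2_eq_square)
  then show ?thesis by (simp add: golden_ratio_def)
qed

lemma inverse_golden_ratio: "1 / golden_ratio = golden_ratio - 1"
  using golden_ratio_sq golden_ratio_gt by (simp add: field_simps power2_eq_square)

lemma golden_ratio_power_ge: "3 \<le> n \<Longrightarrow> real n + 1 \<le> golden_ratio ^ n"
proof (induction n rule: nat_induct_at_least)
  case base
  have "golden_ratio ^ 3 = 2 * golden_ratio + 1"
    using golden_ratio_sq by (simp add: power3_eq_cube power2_eq_square algebra_simps)
  then show ?case using golden_ratio_gt by simp
next
  case (Suc n)
  have "1.6 * (real n + 1) \<le> golden_ratio * golden_ratio ^ n"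
    using Suc.IH golden_ratio_gt by (intro mult_mono) auto
  then show ?case using Suc.hyps by simp
qed

lemma golden_ratio_power_add_inverse_ge:
  assumes "1 \<le> n" shows "real n + 1 \<le> golden_ratio ^ n + 1 / golden_ratio ^ n"
proof -
  consider "n = 1" | "n = 2" | "3 \<le> n" using assms by linarith
  then show ?thesis
  proof cases
    case 1
    have "golden_ratio ^ 1 + 1 / golden_ratio ^ 1 = sqrt 5"
      by (simp add: inverse_golden_ratio) (simp add: golden_ratio_def field_simps)
    moreover have "2 < sqrt (5::real)" by (rule real_less_rsqrt) simp
    ultimately show ?thesis using 1 by simp
  next
    case 2
    have "1 / golden_ratio ^ 2 = (golden_ratio - 1)\<^sup>2"
      by (simp add: inverse_golden_ratio flip: power_one_over)
    then show ?thesis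
      using 2 golden_ratio_sq by (simp add: power2_diff)
  next
    case 3
    then show ?thesis using golden_ratio_power_ge golden_ratio_gt
      by (smt (verit) divide_pos_pos zero_less_power)
  qed
qed

lemma add_inverse_strict_mono:
  fixes a t :: real assumes "1 \<le> a" "a < t" shows "a + 1 / a < t + 1 / t"
proof -
  have "1 < a * t" using assms by (smt (verit) mult_less_cancel_left1)
  moreover have "(t + 1 / t) - (a + 1 / a) = (t - a) * (a * t - 1) / (a * t)"
    using assms by (simp add: field_simps)
  ultimately show ?thesis using assms by (smt (verit) divide_pos_pos mult_pos_pos)
qed

lemma exp_ge_Taylor_partial_sum:
  fixes x :: real assumes "0 \<le> x" shows "(\<Sum>n<N. x ^ n / fact n) \<le> exp x"
proof -
  have "(\<lambda>n. x ^ n / fact n) sums exp x"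
    using exp_converges[of x] by (simp add: divide_inverse mult.commute)
  then have "summable (\<lambda>n. x ^ n / fact n)" "exp x = (\<Sum>n. x ^ n / fact n)"
    by (simp_all add: sums_iff)
  then show ?thesis using assms by (simp add: sum_le_suminf)
qed

lemma ln_golden_ratio_less: "ln golden_ratio < 0.482"
proof -
  have taylor: "(\<Sum>n<5. x ^ n / fact n) = 1 + x + x\<^sup>2 / 2 + x ^ 3 / 6 + x ^ 4 / 24" for x :: real
    by (simp add: eval_nat_numeral fact_Suc)
  have "sqrt 5 < (2.2361::real)" by (rule real_less_lsqrt) (simp_all add: power2_eq_square)
  then have "golden_ratio < (\<Sum>n<5. (0.482::real) ^ n / fact n)"
    unfolding taylor by (simp add: golden_ratio_def power_numeral_reduce)
  also have "\<dots> \<le> exp 0.482" by (rule exp_ge_Taylor_partial_sum) simp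
  finally have "golden_ratio < exp 0.482" .
  moreover have "0 < golden_ratio" using golden_ratio_gt by simp
  ultimately show ?thesis using ln_less_cancel_iff[of golden_ratio "exp 0.482"] by simp
qed

section \<open>Roots near the unit circle\<close>

lemma prod_mset_gt_power:
  fixes f :: "'a \<Rightarrow> real"
  assumes "\<forall>x\<in>#A. c < f x" "0 \<le> c" "A \<noteq> {#}"
  shows "c ^ size A < (\<Prod>x\<in>#A. f x)"
  using assms
proof (induction A)
  case (add x A)
  show ?case
  proof (cases "A = {#}")
    case False
    then have "c ^ size A < (\<Prod>x\<in>#A. f x)" using add by simp
    then show ?thesis using add.prems by (auto intro: mult_strict_mono)
  qed (use add.prems in simp)
qed simp

lemma prod_mset_divide:
  fixes f g :: "'a \<Rightarrow> 'b::field"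
  shows "(\<Prod>x\<in>#A. f x / g x) = (\<Prod>x\<in>#A. f x) / (\<Prod>x\<in>#A. g x)"
  by (induction A) (simp_all add: times_divide_times_eq)

lemma prod_mset_max_mult_min:
  fixes f :: "'a \<Rightarrow> real"
  shows "(\<Prod>x\<in>#A. max 1 (f x)) * (\<Prod>x\<in>#A. min 1 (f x)) = (\<Prod>x\<in>#A. f x)"
  unfolding prod_mset.distrib[symmetric]
  by (intro arg_cong[where f = prod_mset] image_mset_cong) (simp add: max_def min_def)

lemma less_max_div_min_if_less_abs_ln:
  fixes p r :: real
  assumes "0 < p" "0 < r" "ln p < \<bar>ln r\<bar>"
  shows "p < max 1 r / min 1 r"
proof (cases "1 < r")
  case True
  then show ?thesis using assms ln_less_cancel_iff[of p r] by simp
next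
  case False
  then have "ln p < ln (1 / r)" using assms by (simp add: ln_div abs_of_nonpos)
  then show ?thesis using False assms by simp
qed

lemma exists_root_near_unit_circle:
  fixes f :: "complex poly"
  assumes deg: "1 \<le> degree f" and bounded: "\<forall>i. cmod (coeff f i) \<le> 1"
    and const: "cmod (coeff f 0) = 1" and lead: "cmod (lead_coeff f) = 1"
  shows "\<exists>z. z \<noteq> 0 \<and> poly f z = 0 \<and> \<bar>ln (cmod z)\<bar> \<le> ln golden_ratio"
proof (rule ccontr)
  assume no_root: "\<not> ?thesis"
  define M where "M = (\<Prod>z\<in>#proots f. max 1 (cmod z))"
  define m where "m = (\<Prod>z\<in>#proots f. min 1 (cmod z))"
  have "M * m = (\<Prod>z\<in>#proots f. cmod z)"
    unfolding M_def m_def by (rule prod_mset_max_mult_min)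
  then have Mm: "M * m = 1" using const lead norm_coeff_0_eq_prod_roots[of f] by simp
  have norm_bound: "M\<^sup>2 + m\<^sup>2 \<le> real (degree f) + 1"
    using coeff_norm2_ge_root_products[OF deg] coeff_norm2_le_Suc_degree[OF bounded] lead
    by (simp add: M_def m_def)
  have "golden_ratio < max 1 (cmod z) / min 1 (cmod z)" if "z \<in># proots f" for z
  proof -
    have "f \<noteq> 0" using deg by auto
    then have "poly f z = 0" using that set_count_proots[of f] by blast
    moreover have "poly f 0 \<noteq> 0" using const by (auto simp: poly_0_coeff_0)
    ultimately have "z \<noteq> 0" "ln golden_ratio < \<bar>ln (cmod z)\<bar>" using no_root by auto
    then show ?thesis using golden_ratio_gt by (intro less_max_div_min_if_less_abs_ln) auto
  qed
  then have "golden_ratio ^ size (proots f) < M / m"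
    unfolding M_def m_def prod_mset_divide[symmetric]
    by (intro prod_mset_gt_power) (use deg golden_ratio_gt size_proots_complex[of f] in auto)
  moreover have "M / m = M\<^sup>2" "1 / M\<^sup>2 = m\<^sup>2"
  proof -
    have "m = 1 / M" using Mm by (metis mult.commute nonzero_eq_divide_eq zero_neq_one mult_zero_left)
    then show "M / m = M\<^sup>2" "1 / M\<^sup>2 = m\<^sup>2" by (simp_all add: power2_eq_square power_one_over)
  qed
  ultimately have "golden_ratio ^ degree f + 1 / golden_ratio ^ degree f < M\<^sup>2 + m\<^sup>2"
    using add_inverse_strict_mono[of "golden_ratio ^ degree f" "M\<^sup>2"] golden_ratio_gt
    by (simp add: size_proots_complex)
  then show False
    using golden_ratio_power_add_inverse_ge[OF deg] norm_bound by linarith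
qed

lemma INF_Amoeba_dist_le:
  assumes "z \<noteq> 0" "poly f z = 0"
  shows "(INF \<rho>\<in>Amoeba f. \<bar>\<rho> - \<sigma>\<bar>) \<le> \<bar>ln (cmod z) - \<sigma>\<bar>"
proof -
  have "ln (cmod z) \<in> Amoeba f" using assms by (auto simp: Amoeba_def)
  then show ?thesis by (intro cINF_lower) (auto intro: bdd_belowI[of _ 0])
qed

lemma Amoeba_golden_poly: "Amoeba [:-1, -1, 1:] = {ln golden_ratio, - ln golden_ratio}"
proof -
  let ?\<phi> = "complex_of_real golden_ratio"
  have "?\<phi> * ?\<phi> = ?\<phi> + 1"
    using golden_ratio_sq by (metis of_real_add of_real_mult of_real_1 power2_eq_square)
  then have "poly [:-1, -1, 1:] z = (z - ?\<phi>) * (z - (1 - ?\<phi>))" for z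
    by (simp add: algebra_simps)
  then have roots: "poly [:-1, -1, 1:] z = 0 \<longleftrightarrow> z = ?\<phi> \<or> z = of_real (1 - golden_ratio)" for z
    by simp
  have ln_conjugate: "ln (golden_ratio - 1) = - ln golden_ratio"
    using golden_ratio_gt by (simp flip: inverse_golden_ratio add: ln_div)
  have "Amoeba [:-1, -1, 1:] = {ln (cmod z) | z. z = ?\<phi> \<or> z = of_real (1 - golden_ratio)}"
    unfolding Amoeba_def roots using golden_ratio_gt by auto
  also have "\<dots> = {ln (cmod ?\<phi>), ln (cmod (complex_of_real (1 - golden_ratio)))}"
    by blast
  also have "\<dots> = {ln golden_ratio, ln (golden_ratio - 1)}"
    using golden_ratio_gt by (simp only: norm_of_real) simp
  finally show ?thesis using ln_conjugate by simp
qed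

lemma golden_poly_ArchTrop_Amoeba_distance:
  "(SUP \<sigma>\<in>ArchTrop [:-1, -1, 1:]. INF \<rho>\<in>Amoeba [:-1, -1, 1:]. \<bar>\<rho> - \<sigma>\<bar>) = ln golden_ratio"
proof -
  interpret polygon_in_strip "ArchNewt [:-1, -1, 1:]" "real (degree [:-1, -1, 1::complex:])"
    by (rule ArchNewt_polygon_in_strip) (auto simp: coeff_pCons split: nat.split)
  have "ArchTrop [:-1, -1, 1:] = {0}"
    unfolding ArchTrop_def by (rule lower_normal_slopes)
  moreover have "0 < ln golden_ratio" using golden_ratio_gt by simp
  ultimately show ?thesis by (simp add: Amoeba_golden_poly)
qed

theorem corollary2p2:
  fixes f :: "complex poly" and d :: nat
  assumes "degree f = d" and "d \<ge> 1"
    and "\<forall>i. cmod (coeff f i) \<le> 1"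
    and "cmod (coeff f 0) = 1" and "cmod (coeff f d) = 1"
  shows "(\<exists>!E. lower_edge (ArchNewt f) E)
    \<and> (\<forall>E. lower_edge (ArchNewt f) E \<longrightarrow> horizontal E)
    \<and> ArchTrop f = {0}
    \<and> (SUP \<sigma>\<in>ArchTrop f. INF \<rho>\<in>Amoeba f. \<bar>\<rho> - \<sigma>\<bar>) \<le> ln ((sqrt 5 + 1) / 2)
    \<and> ln ((sqrt 5 + 1) / 2) < (0.482::real)
    \<and> (let g = [:-1, -1, 1:] :: complex poly in
        (SUP \<sigma>\<in>ArchTrop g. INF \<rho>\<in>Amoeba g. \<bar>\<rho> - \<sigma>\<bar>) = ln ((sqrt 5 + 1) / 2))"
proof -
  have deg: "1 \<le> degree f" and lead: "cmod (lead_coeff f) = 1"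
    using assms by simp_all
  interpret polygon_in_strip "ArchNewt f" "real d"
    using ArchNewt_polygon_in_strip[OF deg assms(3,4) lead] assms(1) by simp
  have trop: "ArchTrop f = {0}"
    unfolding ArchTrop_def by (rule lower_normal_slopes)
  obtain z where "z \<noteq> 0" "poly f z = 0" "\<bar>ln (cmod z)\<bar> \<le> ln golden_ratio"
    using exists_root_near_unit_circle[OF deg assms(3,4) lead] by blast
  then have "(SUP \<sigma>\<in>ArchTrop f. INF \<rho>\<in>Amoeba f. \<bar>\<rho> - \<sigma>\<bar>) \<le> ln golden_ratio"
    using INF_Amoeba_dist_le[of z f 0] by (simp add: trop)
  moreover have "\<exists>!E. lower_edge (ArchNewt f) E"
    by (rule ex1I[of _ "closed_segment (0, 0) (real d, 0)"]) (simp_all add: lower_edge_iff)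
  moreover have "\<forall>E. lower_edge (ArchNewt f) E \<longrightarrow> horizontal E"
    by (simp add: lower_edge_iff horizontal_closed_segment_on_first_axis)
  ultimately show ?thesis
    using trop ln_golden_ratio_less golden_poly_ArchTrop_Amoeba_distance
    by (simp add: golden_ratio_def)
qed

end
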